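(* Let $\mathcal C$ be a pseudo-purifiable discard category, let $(A_i)_{i\ge1}$, $(B_i)_{i\ge1}$ be sequences of objects, and let $(f_k)_{k\ge1}$ with $f_k\in\mathcal C(A_1\otimes\cdots\otimes A_k,B_1\otimes\cdots\otimes B_k)$ be a monotone and regular sequence. Then there exists a regular stateful morphism sequence $\alpha$ over $\mathcal C$ with inputs $(A_i)$ and outputs $(B_i)$ such that $\mathrm{FA}_k(\alpha)=f_k$ for all $k\ge1$. (That is, the functor $\mathrm{FA}$ from regular stateful morphism sequences to finite approximation sequences is full.)
   Context: Monoidal categories are treated as strict; $\sigma$ is the symmetry; write $\hat A_k=A_1\otimes\cdots\otimes A_k$. A discard category is a symmetric monoidal category with, for each object $A$, $\top_A:A\to I$ with $\top_I=\mathrm{id}_I$, $\top_{A\otimes B}=\top_A\otimes\top_B$; $f$ is causal if $\top\circ f=\top$. For $f,g\in\mathcal C(A,B)$, $f\preceq g$ iff there are $X$, $g_0\in\mathcal C(A,B\otimes X)$, $f_0\in\mathcal C(X,I)$ with $f=(\mathrm{id}_B\otimes f_0)\circ g_0$ and $g=(\mathrm{id}_B\otimes\top_X)\circ g_0$. $p\in\mathcal C(A,B\otimes X)$ is a pseudo-purification of $f\in\mathcal C(A,B)$ ($p\in\mathrm{Pure}(f)$) if for every $Y$ and $g\in\mathcal C(A,B\otimes Y)$ with $f=(\mathrm{id}_B\otimes\top_Y)\circ g$ there is a causal $c\in\mathcal C(X,Y)$ with $g=(\mathrm{id}_B\otimes c)\circ p$. Pseudo-purifiable: every morphism has a pseudo-purification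 and, for $f_1\in\mathcal C(A_1,B_1\otimes C)$, $f_2\in\mathcal C(C\otimes A_2,B_2)$, $p_1\in\mathrm{Pure}(f_1)$, $p_1:A_1\to B_1\otimes C\otimes X_1$, $p_2\in\mathrm{Pure}(f_2)$, $p_2:C\otimes A_2\to B_2\otimes X_2$, the morphism $(\mathrm{id}_{B_1\otimes B_2}\otimes\sigma_{X_2,X_1})\circ(\mathrm{id}_{B_1}\otimes p_2\otimes\mathrm{id}_{X_1})\circ(\mathrm{id}_{B_1\otimes C}\otimes\sigma_{X_1,A_2})\circ(p_1\otimes\mathrm{id}_{A_2})$ is in $\mathrm{Pure}((\mathrm{id}_{B_1}\otimes f_2)\circ(f_1\otimes\mathrm{id}_{A_2}))$. The sequence $(f_k)$ is monotone if for every $k\ge1$: $(\mathrm{id}_{\hat B_k}\otimes\top_{B_{k+1}})\circ f_{k+1}\preceq f_k\otimes\top_{A_{k+1}}$. It is regular if there exist $n\ge1$, objects $A',B',M$ with $A_k=A'$ and $B_k=B'$ for all $k>n$, and morphisms $g^{\mathrm{irreg}}\in\mathcal C(\hat A_n,\hat B_n\otimes M)$, $g^{\mathrm{reg}}\in\mathcal C(M\otimes A',B'\otimes M)$ such that, setting $\Psi_n=g^{\mathrm{irreg}}$ and $\Psi_{k+1}=(\mathrm{id}_{\hat B_k}\otimes g^{\mathrm{reg}})\circ(\Psi_k\otimes\mathrm{id}_{A_{k+1}})$, we have $f_k=(\mathrm{id}_{\hat B_k}\otimes\top_M)\circ\Psi_k$ for all $k\ge n$. A stateful morphism sequence $\alpha$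 consists of objects $(A_i)_{i\ge1},(B_i)_{i\ge1},(M_i)_{i\ge0}$ with $M_0=I$ and layers $\alpha_i\in\mathcal C(A_i\otimes M_{i-1},B_i\otimes M_i)$; it is regular if there is $n$ with $A_k=A_n,B_k=B_n,M_k=M_n,\alpha_k=\alpha_n$ for all $k\ge n$. With $\Phi_1=\alpha_1$ and $\Phi_{k+1}=(\mathrm{id}_{\hat B_k}\otimes\alpha_{k+1})\circ(\mathrm{id}_{\hat B_k}\otimes\sigma_{M_k,A_{k+1}})\circ(\Phi_k\otimes\mathrm{id}_{A_{k+1}})$, set $\mathrm{FA}_k(\alpha)=(\mathrm{id}_{\hat B_k}\otimes\top_{M_k})\circ\Phi_k$. *)

theory Defs
  imports Main
begin

text \<open>Objects are the elements of type 'o, morphisms are those elements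
of type 'm satisfying arr. Composition: comp g f = g after f.\<close>

record ('o, 'm) dcat =
  arr   :: "'m \<Rightarrow> bool"
  dom   :: "'m \<Rightarrow> 'o"
  cod   :: "'m \<Rightarrow> 'o"
  comp  :: "'m \<Rightarrow> 'm \<Rightarrow> 'm"
  ident :: "'o \<Rightarrow> 'm"
  unit  :: "'o"
  otens :: "'o \<Rightarrow> 'o \<Rightarrow> 'o"
  mtens :: "'m \<Rightarrow> 'm \<Rightarrow> 'm"
  sym   :: "'o \<Rightarrow> 'o \<Rightarrow> 'm"
  disc  :: "'o \<Rightarrow> 'm"

definition hom :: "('o, 'm, 'x) dcat_scheme \<Rightarrow> 'o \<Rightarrow> 'o \<Rightarrow> 'm set" where
  "hom C A B = {f. arr C f \<and> dom C f = A \<and> cod C f = B}"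

definition strict_smc :: "('o, 'm, 'x) dcat_scheme \<Rightarrow> bool" where
  "strict_smc C \<longleftrightarrow>
    \<comment> \<open>category\<close>
    (\<forall>A. ident C A \<in> hom C A A) \<and>
    (\<forall>f g. arr C f \<and> arr C g \<and> cod C f = dom C g \<longrightarrow>
        comp C g f \<in> hom C (dom C f) (cod C g)) \<and>
    (\<forall>f g h. arr C f \<and> arr C g \<and> arr C h \<and> cod C f = dom C g \<and> cod C g = dom C h \<longrightarrow>
        comp C h (comp C g f) = comp C (comp C h g) f) \<and>
    (\<forall>f. arr C f \<longrightarrow> comp C (ident C (cod C f)) f = f \<and> comp C f (ident C (dom C f)) = f) \<and>
    \<comment> \<open>strict monoidal structure on objects\<close>
    (\<forall>A B D. otens C (otens C A B) D = otens C A (otens C B D)) \<and>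
    (\<forall>A. otens C (unit C) A = A \<and> otens C A (unit C) = A) \<and>
    \<comment> \<open>tensor of morphisms: a strictly associative, unital bifunctor\<close>
    (\<forall>f g. arr C f \<and> arr C g \<longrightarrow>
        mtens C f g \<in> hom C (otens C (dom C f) (dom C g)) (otens C (cod C f) (cod C g))) \<and>
    (\<forall>f g h. arr C f \<and> arr C g \<and> arr C h \<longrightarrow> mtens C (mtens C f g) h = mtens C f (mtens C g h)) \<and>
    (\<forall>f. arr C f \<longrightarrow> mtens C (ident C (unit C)) f = f \<and> mtens C f (ident C (unit C)) = f) \<and>
    (\<forall>A B. mtens C (ident C A) (ident C B) = ident C (otens C A B)) \<and>
    (\<forall>f g f' g'. arr C f \<and> arr C g \<and> arr C f' \<and> arr C g' \<and> cod C f = dom C g \<and> cod C f' = dom C g' \<longrightarrow>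
        mtens C (comp C g f) (comp C g' f') = comp C (mtens C g g') (mtens C f f')) \<and>
    \<comment> \<open>symmetry\<close>
    (\<forall>A B. sym C A B \<in> hom C (otens C A B) (otens C B A)) \<and>
    (\<forall>f g. arr C f \<and> arr C g \<longrightarrow>
        comp C (mtens C g f) (sym C (dom C f) (dom C g)) = comp C (sym C (cod C f) (cod C g)) (mtens C f g)) \<and>
    (\<forall>A B. comp C (sym C B A) (sym C A B) = ident C (otens C A B)) \<and>
    (\<forall>A B D. sym C A (otens C B D) =
        comp C (mtens C (ident C B) (sym C A D)) (mtens C (sym C A B) (ident C D))) \<and>
    (\<forall>A B D. sym C (otens C A B) D =
        comp C (mtens C (sym C A D) (ident C B)) (mtens C (ident C A) (sym C B D)))"

definition discard_category :: "('o, 'm, 'x) dcat_scheme \<Rightarrow> bool" where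
  "discard_category C \<longleftrightarrow> strict_smc C \<and>
    (\<forall>A. disc C A \<in> hom C A (unit C)) \<and>
    disc C (unit C) = ident C (unit C) \<and>
    (\<forall>A B. disc C (otens C A B) = mtens C (disc C A) (disc C B))"

definition causal :: "('o, 'm, 'x) dcat_scheme \<Rightarrow> 'm \<Rightarrow> bool" where
  "causal C f \<longleftrightarrow> comp C (disc C (cod C f)) f = disc C (dom C f)"

definition prec :: "('o, 'm, 'x) dcat_scheme \<Rightarrow> 'o \<Rightarrow> 'o \<Rightarrow> 'm \<Rightarrow> 'm \<Rightarrow> bool" where
  "prec C A B f g \<longleftrightarrow> (\<exists>X g0 f0. g0 \<in> hom C A (otens C B X) \<and> f0 \<in> hom C X (unit C) \<and>
     f = comp C (mtens C (ident C B) f0) g0 \<and>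
     g = comp C (mtens C (ident C B) (disc C X)) g0)"

text \<open>p : A \<rightarrow> B \<otimes> X is a pseudo-purification of f : A \<rightarrow> B.\<close>
definition is_pure :: "('o, 'm, 'x) dcat_scheme \<Rightarrow> 'o \<Rightarrow> 'o \<Rightarrow> 'm \<Rightarrow> 'o \<Rightarrow> 'm \<Rightarrow> bool" where
  "is_pure C A B f X p \<longleftrightarrow> f \<in> hom C A B \<and> p \<in> hom C A (otens C B X) \<and>
     (\<forall>Y g. g \<in> hom C A (otens C B Y) \<and> f = comp C (mtens C (ident C B) (disc C Y)) g \<longrightarrow>
        (\<exists>c. c \<in> hom C X Y \<and> causal C c \<and> g = comp C (mtens C (ident C B) c) p))"

definition pseudo_purifiable :: "('o, 'm, 'x) dcat_scheme \<Rightarrow> bool" where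
  "pseudo_purifiable C \<longleftrightarrow>
    (\<forall>A B f. f \<in> hom C A B \<longrightarrow> (\<exists>X p. is_pure C A B f X p)) \<and>
    (\<forall>A1 B1 D A2 B2 f1 f2 X1 p1 X2 p2.
       f1 \<in> hom C A1 (otens C B1 D) \<and> f2 \<in> hom C (otens C D A2) B2 \<and>
       is_pure C A1 (otens C B1 D) f1 X1 p1 \<and> is_pure C (otens C D A2) B2 f2 X2 p2 \<longrightarrow>
       is_pure C (otens C A1 A2) (otens C B1 B2)
         (comp C (mtens C (ident C B1) f2) (mtens C f1 (ident C A2)))
         (otens C X1 X2)
         (comp C (mtens C (ident C (otens C B1 B2)) (sym C X2 X1))
           (comp C (mtens C (mtens C (ident C B1) p2) (ident C X1))
             (comp C (mtens C (ident C (otens C B1 D)) (sym C X1 A2))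
               (mtens C p1 (ident C A2))))))"

primrec hat :: "('o, 'm, 'x) dcat_scheme \<Rightarrow> (nat \<Rightarrow> 'o) \<Rightarrow> nat \<Rightarrow> 'o" where
  "hat C A 0 = unit C"
| "hat C A (Suc k) = otens C (hat C A k) (A (Suc k))"

definition monotone_seq :: "('o, 'm, 'x) dcat_scheme \<Rightarrow> (nat \<Rightarrow> 'o) \<Rightarrow> (nat \<Rightarrow> 'o) \<Rightarrow> (nat \<Rightarrow> 'm) \<Rightarrow> bool" where
  "monotone_seq C A B f \<longleftrightarrow> (\<forall>k\<ge>1.
     prec C (hat C A (Suc k)) (hat C B k)
       (comp C (mtens C (ident C (hat C B k)) (disc C (B (Suc k)))) (f (Suc k)))
       (mtens C (f k) (disc C (A (Suc k)))))"

text \<open>psi C A B n gir greg j = \<Psi>_(n+j).\<close>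
primrec psi :: "('o, 'm, 'x) dcat_scheme \<Rightarrow> (nat \<Rightarrow> 'o) \<Rightarrow> (nat \<Rightarrow> 'o) \<Rightarrow> nat \<Rightarrow> 'm \<Rightarrow> 'm \<Rightarrow> nat \<Rightarrow> 'm" where
  "psi C A B n gir greg 0 = gir"
| "psi C A B n gir greg (Suc j) =
     comp C (mtens C (ident C (hat C B (n + j))) greg)
            (mtens C (psi C A B n gir greg j) (ident C (A (Suc (n + j)))))"

definition regular_seq :: "('o, 'm, 'x) dcat_scheme \<Rightarrow> (nat \<Rightarrow> 'o) \<Rightarrow> (nat \<Rightarrow> 'o) \<Rightarrow> (nat \<Rightarrow> 'm) \<Rightarrow> bool" where
  "regular_seq C A B f \<longleftrightarrow> (\<exists>n A' B' M gir greg. n \<ge> 1 \<and>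
     (\<forall>k>n. A k = A' \<and> B k = B') \<and>
     gir \<in> hom C (hat C A n) (otens C (hat C B n) M) \<and>
     greg \<in> hom C (otens C M A') (otens C B' M) \<and>
     (\<forall>k\<ge>n. f k = comp C (mtens C (ident C (hat C B k)) (disc C M)) (psi C A B n gir greg (k - n))))"

definition stateful_seq :: "('o, 'm, 'x) dcat_scheme \<Rightarrow> (nat \<Rightarrow> 'o) \<Rightarrow> (nat \<Rightarrow> 'o) \<Rightarrow> (nat \<Rightarrow> 'o) \<Rightarrow> (nat \<Rightarrow> 'm) \<Rightarrow> bool" where
  "stateful_seq C A B M alpha \<longleftrightarrow> M 0 = unit C \<and>
     (\<forall>i\<ge>1. alpha i \<in> hom C (otens C (A i) (M (i - 1))) (otens C (B i) (M i)))"

definition regular_stateful :: "(nat \<Rightarrow> 'o) \<Rightarrow> (nat \<Rightarrow> 'o) \<Rightarrow> (nat \<Rightarrow> 'o) \<Rightarrow> (nat \<Rightarrow> 'm) \<Rightarrow> bool" where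
  "regular_stateful A B M alpha \<longleftrightarrow> (\<exists>n\<ge>1. \<forall>k\<ge>n.
     A k = A n \<and> B k = B n \<and> M k = M n \<and> alpha k = alpha n)"

fun Phi :: "('o, 'm, 'x) dcat_scheme \<Rightarrow> (nat \<Rightarrow> 'o) \<Rightarrow> (nat \<Rightarrow> 'o) \<Rightarrow> (nat \<Rightarrow> 'o) \<Rightarrow> (nat \<Rightarrow> 'm) \<Rightarrow> nat \<Rightarrow> 'm" where
  "Phi C A B M alpha 0 = ident C (unit C)"
| "Phi C A B M alpha (Suc 0) = alpha 1"
| "Phi C A B M alpha (Suc (Suc k)) =
     comp C (mtens C (ident C (hat C B (Suc k))) (alpha (Suc (Suc k))))
       (comp C (mtens C (ident C (hat C B (Suc k))) (sym C (M (Suc k)) (A (Suc (Suc k)))))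
          (mtens C (Phi C A B M alpha (Suc k)) (ident C (A (Suc (Suc k))))))"

definition FA :: "('o, 'm, 'x) dcat_scheme \<Rightarrow> (nat \<Rightarrow> 'o) \<Rightarrow> (nat \<Rightarrow> 'o) \<Rightarrow> (nat \<Rightarrow> 'o) \<Rightarrow> (nat \<Rightarrow> 'm) \<Rightarrow> nat \<Rightarrow> 'm" where
  "FA C A B M alpha k = comp C (mtens C (ident C (hat C B k)) (disc C (M k))) (Phi C A B M alpha k)"

end

theory Submission
  imports Defs
begin

(* Let n, g_irreg, g_reg witness regularity, so that \<Psi>_k dilates f_k for k \<ge> n.
   Take P_k a pseudo-purification of f_k for k < n and P_k = \<Psi>_k for k \<ge> n.
   Monotonicity says that the marginal of f_(k+1) on B_1 \<otimes> ... \<otimes> B_k is obtained from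
   f_k \<otimes> \<top> by post-processing an environment. Since P_k \<otimes> id is a pseudo-purification
   of f_k \<otimes> \<top> and pseudo-purifications compose sequentially, every dilation of f_(k+1),
   in particular P_(k+1), factors as (id \<otimes> \<beta>_k) \<circ> (P_k \<otimes> id) when k < n; for k \<ge> n this
   holds with \<beta>_k = g_reg by the definition of \<Psi>. The layers \<beta>_k then form a regular
   stateful sequence whose k-th unrolling is P_k, so its k-th finite approximation is the
   marginal f_k. *)

locale discard_cat =
  fixes C :: "('o, 'm, 'x) dcat_scheme"
  assumes discard_category: "discard_category C"
begin

abbreviation ccomp (infixr "\<bullet>" 55) where "g \<bullet> f \<equiv> comp C g f"
abbreviation mtensor (infixr "\<otimes>" 60) where "f \<otimes> g \<equiv> mtens C f g"
abbreviation otensor (infixr "\<odot>" 60) where "a \<odot> b \<equiv> otens C a b"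
abbreviation "idt \<equiv> ident C"
abbreviation "I \<equiv> unit C"
abbreviation "dsc \<equiv> disc C"
abbreviation "sy \<equiv> sym C"
abbreviation "ar \<equiv> arr C"
abbreviation "dm \<equiv> dom C"
abbreviation "cd \<equiv> cod C"

lemma strict_smc: "strict_smc C"
  using discard_category by (simp add: discard_category_def)

lemmas smc_axioms = strict_smc[unfolded strict_smc_def hom_def mem_Collect_eq]

lemma hom_iff: "f \<in> hom C a b \<longleftrightarrow> ar f \<and> dm f = a \<and> cd f = b"
  by (simp add: hom_def)

lemma ident_typ [simp]: "ar (idt a)" "dm (idt a) = a" "cd (idt a) = a"
  using smc_axioms by auto

lemma comp_typ [simp]:
  assumes "ar f" "ar g" "cd f = dm g"
  shows "ar (g \<bullet> f)" "dm (g \<bullet> f) = dm f" "cd (g \<bullet> f) = cd g"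
  using smc_axioms assms by auto

lemma comp_assoc:
  assumes "ar f" "ar g" "ar h" "cd f = dm g" "cd g = dm h"
  shows "(h \<bullet> g) \<bullet> f = h \<bullet> (g \<bullet> f)"
  using smc_axioms assms by metis

lemma comp_ident_left: "ar f \<Longrightarrow> cd f = a \<Longrightarrow> idt a \<bullet> f = f"
  and comp_ident_right: "ar f \<Longrightarrow> dm f = a \<Longrightarrow> f \<bullet> idt a = f"
  using smc_axioms by auto

lemma otens_assoc [simp]: "(a \<odot> b) \<odot> c = a \<odot> (b \<odot> c)"
  and otens_unit [simp]: "I \<odot> a = a" "a \<odot> I = a"
  using smc_axioms by auto

lemma mtens_typ [simp]:
  assumes "ar f" "ar g"
  shows "ar (f \<otimes> g)" "dm (f \<otimes> g) = dm f \<odot> dm g" "cd (f \<otimes> g) = cd f \<odot> cd g"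
  using smc_axioms assms by auto

lemma mtens_assoc [simp]: "ar f \<Longrightarrow> ar g \<Longrightarrow> ar h \<Longrightarrow> (f \<otimes> g) \<otimes> h = f \<otimes> (g \<otimes> h)"
  and mtens_unit [simp]: "ar f \<Longrightarrow> idt I \<otimes> f = f" "ar f \<Longrightarrow> f \<otimes> idt I = f"
  using smc_axioms by auto

lemma ident_mtens [simp]: "idt a \<otimes> idt b = idt (a \<odot> b)"
  using smc_axioms by blast

lemma interchange:
  assumes "ar f" "ar g" "ar f'" "ar g'" "cd f = dm g" "cd f' = dm g'"
  shows "(g \<bullet> f) \<otimes> (g' \<bullet> f') = (g \<otimes> g') \<bullet> (f \<otimes> f')"
  using smc_axioms assms by blast

lemma sym_typ [simp]: "ar (sy a b)" "dm (sy a b) = a \<odot> b" "cd (sy a b) = b \<odot> a"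
  using smc_axioms by auto

lemma sym_inverse: "sy b a \<bullet> sy a b = idt (a \<odot> b)"
  using smc_axioms by blast

lemmas disc_axioms = discard_category[unfolded discard_category_def hom_def mem_Collect_eq]

lemma disc_typ [simp]: "ar (dsc a)" "dm (dsc a) = a" "cd (dsc a) = I"
  using disc_axioms by auto

lemma disc_unit: "dsc I = idt I"
  and disc_otens: "dsc (a \<odot> b) = dsc a \<otimes> dsc b"
  using disc_axioms by auto

lemma ident_mtens_comp:
  assumes "ar f" "ar g" "cd f = dm g"
  shows "(idt a \<otimes> g) \<bullet> (idt a \<otimes> f) = idt a \<otimes> (g \<bullet> f)"
  using interchange[of "idt a" "idt a" f g] assms comp_ident_left[of "idt a" a] by simp

lemma ident_mtens_comp_assoc:
  assumes "ar f" "ar g" "cd f = dm g" "ar r" "cd r = a \<odot> dm f"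
  shows "(idt a \<otimes> g) \<bullet> ((idt a \<otimes> f) \<bullet> r) = (idt a \<otimes> (g \<bullet> f)) \<bullet> r"
  using comp_assoc[of r "idt a \<otimes> f" "idt a \<otimes> g"] assms ident_mtens_comp[of f g a] by simp

lemma ident_mtens_disc_otens:
  "idt a \<otimes> dsc (b \<odot> z) = (idt a \<otimes> dsc b) \<bullet> (idt (a \<odot> b) \<otimes> dsc z)"
proof -
  have "(idt a \<otimes> dsc b) \<bullet> (idt (a \<odot> b) \<otimes> dsc z) = ((idt a \<otimes> dsc b) \<bullet> idt (a \<odot> b)) \<otimes> (idt I \<bullet> dsc z)"
    by (subst interchange) auto
  also have "\<dots> = (idt a \<otimes> dsc b) \<otimes> dsc z"
    by (simp add: comp_ident_left comp_ident_right)
  finally show ?thesis by (simp add: disc_otens)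
qed

lemma causal_iff: "ar c \<Longrightarrow> causal C c \<longleftrightarrow> dsc (cd c) \<bullet> c = dsc (dm c)"
  by (simp add: causal_def)

lemma pure_homs:
  assumes "is_pure C a b f x p"
  shows "f \<in> hom C a b" "p \<in> hom C a (b \<odot> x)"
  using assms unfolding is_pure_def by auto

lemma pure_factor:
  assumes "is_pure C a b f x p" "g \<in> hom C a (b \<odot> y)" "(idt b \<otimes> dsc y) \<bullet> g = f"
  obtains c where "c \<in> hom C x y" "causal C c" "g = (idt b \<otimes> c) \<bullet> p"
  using assms unfolding is_pure_def by metis

lemma pure_marginal:
  assumes pure: "is_pure C a b f x p"
  shows "(idt b \<otimes> dsc x) \<bullet> p = f"
proof -
  have "f \<in> hom C a (b \<odot> I)" "(idt b \<otimes> dsc I) \<bullet> f = f"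
    using pure_homs(1)[OF pure] by (simp_all add: hom_iff disc_unit comp_ident_left)
  then obtain c where c: "c \<in> hom C x I" "causal C c" "f = (idt b \<otimes> c) \<bullet> p"
    by (rule pure_factor[OF pure])
  have "c = dsc x"
    using c(1,2) by (simp add: hom_iff causal_iff disc_unit comp_ident_left)
  with c(3) show ?thesis by simp
qed

lemma is_pure_disc: "is_pure C a I (dsc a) a (idt a)"
  unfolding is_pure_def
proof (intro conjI allI impI)
  show "dsc a \<in> hom C a I" "idt a \<in> hom C a (I \<odot> a)"
    by (simp_all add: hom_iff)
  fix y g assume "g \<in> hom C a (I \<odot> y) \<and> dsc a = (idt I \<otimes> dsc y) \<bullet> g"
  then show "\<exists>c. c \<in> hom C a y \<and> causal C c \<and> g = (idt I \<otimes> c) \<bullet> idt a"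
    by (intro exI[of _ g]) (simp add: hom_iff causal_iff comp_ident_right)
qed

definition layer_factorization ::
    "(nat \<Rightarrow> 'o) \<Rightarrow> (nat \<Rightarrow> 'o) \<Rightarrow> (nat \<Rightarrow> 'o) \<Rightarrow> (nat \<Rightarrow> 'm) \<Rightarrow> (nat \<Rightarrow> 'm) \<Rightarrow> bool" where
  "layer_factorization A B X P \<beta> \<longleftrightarrow> P 1 \<in> hom C (A 1) (B 1 \<odot> X 1) \<and>
     (\<forall>k\<ge>1. \<beta> k \<in> hom C (X k \<odot> A (Suc k)) (B (Suc k) \<odot> X (Suc k)) \<and>
        P (Suc k) = (idt (hat C B k) \<otimes> \<beta> k) \<bullet> (P k \<otimes> idt (A (Suc k))))"

definition memories :: "(nat \<Rightarrow> 'o) \<Rightarrow> nat \<Rightarrow> 'o" where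
  "memories X i = (if i = 0 then I else X i)"

(* The swap cancels the one that Phi inserts between memory and input. *)
definition layers :: "(nat \<Rightarrow> 'o) \<Rightarrow> (nat \<Rightarrow> 'o) \<Rightarrow> (nat \<Rightarrow> 'm) \<Rightarrow> (nat \<Rightarrow> 'm) \<Rightarrow> nat \<Rightarrow> 'm" where
  "layers A X P \<beta> i = (if i \<le> 1 then P 1 else \<beta> (i - 1) \<bullet> sy (A i) (X (i - 1)))"

lemma layer_factorization_hom:
  assumes "layer_factorization A B X P \<beta>" "1 \<le> k"
  shows "P k \<in> hom C (hat C A k) (hat C B k \<odot> X k)"
  using assms(2)
proof (induction k rule: nat_induct_at_least)
  case base
  then show ?case using assms(1) by (simp add: layer_factorization_def)
next
  case (Suc k)
  then show ?case using assms(1) by (auto simp: layer_factorization_def hom_iff)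
qed

lemma Phi_Suc:
  "1 \<le> k \<Longrightarrow> Phi C A B M \<alpha> (Suc k) =
     (idt (hat C B k) \<otimes> \<alpha> (Suc k)) \<bullet> (idt (hat C B k) \<otimes> sy (M k) (A (Suc k))) \<bullet>
     (Phi C A B M \<alpha> k \<otimes> idt (A (Suc k)))"
  by (cases k) simp_all

lemma Phi_layers:
  assumes fac: "layer_factorization A B X P \<beta>" and "1 \<le> k"
  shows "Phi C A B (memories X) (layers A X P \<beta>) k = P k"
  using assms(2)
proof (induction k rule: nat_induct_at_least)
  case base
  then show ?case by (simp add: layers_def)
next
  case (Suc k)
  have \<beta>: "ar (\<beta> k)" "dm (\<beta> k) = X k \<odot> A (Suc k)"
    and P_Suc: "P (Suc k) = (idt (hat C B k) \<otimes> \<beta> k) \<bullet> (P k \<otimes> idt (A (Suc k)))"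
    using fac Suc.hyps by (auto simp: layer_factorization_def hom_iff)
  have P: "ar (P k)" "cd (P k) = hat C B k \<odot> X k"
    using layer_factorization_hom[OF fac Suc.hyps] by (auto simp: hom_iff)
  have "Phi C A B (memories X) (layers A X P \<beta>) (Suc k) =
      (idt (hat C B k) \<otimes> (\<beta> k \<bullet> sy (A (Suc k)) (X k))) \<bullet>
      (idt (hat C B k) \<otimes> sy (X k) (A (Suc k))) \<bullet> (P k \<otimes> idt (A (Suc k)))"
    unfolding Phi_Suc[OF Suc.hyps] Suc.IH using Suc.hyps by (simp add: layers_def memories_def)
  also have "\<dots> = P (Suc k)"
    using \<beta> P unfolding P_Suc
    by (simp add: ident_mtens_comp_assoc comp_assoc sym_inverse comp_ident_right)
  finally show ?case .
qed

lemma FA_layers: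
  assumes "layer_factorization A B X P \<beta>" "1 \<le> k"
  shows "FA C A B (memories X) (layers A X P \<beta>) k = (idt (hat C B k) \<otimes> dsc (X k)) \<bullet> P k"
  using Phi_layers[OF assms] assms(2) by (simp add: FA_def memories_def)

lemma stateful_seq_layers:
  assumes fac: "layer_factorization A B X P \<beta>"
  shows "stateful_seq C A B (memories X) (layers A X P \<beta>)"
  unfolding stateful_seq_def
proof (intro conjI allI impI)
  show "memories X 0 = I"
    by (simp add: memories_def)
  fix i :: nat assume "1 \<le> i"
  then obtain k where i: "i = Suc k"
    using Suc_le_D by force
  show "layers A X P \<beta> i \<in> hom C (A i \<odot> memories X (i - 1)) (B i \<odot> memories X i)"
  proof (cases "k = 0")
    case True
    then show ?thesis using fac i by (simp add: layer_factorization_def layers_def memories_def)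
  next
    case False
    then have "\<beta> k \<in> hom C (X k \<odot> A (Suc k)) (B (Suc k) \<odot> X (Suc k))"
      using fac by (simp add: layer_factorization_def)
    then show ?thesis using False i by (simp add: layers_def memories_def hom_iff)
  qed
qed

lemma regular_stateful_layers:
  assumes "1 \<le> n"
    and "\<forall>k\<ge>n. A (Suc k) = A (Suc n) \<and> B (Suc k) = B (Suc n) \<and> X k = X n \<and> \<beta> k = \<beta> n"
  shows "regular_stateful A B (memories X) (layers A X P \<beta>)"
  unfolding regular_stateful_def
proof (intro exI[of _ "Suc n"] conjI allI impI)
  fix k assume "Suc n \<le> k"
  then obtain j where k: "k = Suc j" and j: "n \<le> j"
    using Suc_le_D by fastforce
  have const: "A (Suc j) = A (Suc n)" "B (Suc j) = B (Suc n)" "X j = X n" "\<beta> j = \<beta> n"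
    "X (Suc j) = X n" "X (Suc n) = X n"
    using assms(2) j by (metis le_SucI order_refl)+
  show "A k = A (Suc n)" "B k = B (Suc n)" "memories X k = memories X (Suc n)"
    "layers A X P \<beta> k = layers A X P \<beta> (Suc n)"
    using assms(1) j unfolding k memories_def layers_def by (simp_all add: const)
qed simp

lemma psi_hom:
  assumes gir: "gir \<in> hom C (hat C A n) (hat C B n \<odot> M)"
    and greg: "greg \<in> hom C (M \<odot> A') (B' \<odot> M)"
    and AB: "\<forall>k>n. A k = A' \<and> B k = B'"
  shows "psi C A B n gir greg j \<in> hom C (hat C A (n + j)) (hat C B (n + j) \<odot> M)"
proof (induction j)
  case 0
  then show ?case using gir by simp
next
  case (Suc j)
  moreover have "A (Suc (n + j)) = A'" "B (Suc (n + j)) = B'"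
    using AB by auto
  ultimately show ?case using greg by (simp add: hom_iff)
qed

end

locale pseudo_purifiable_cat = discard_cat +
  assumes pseudo_purifiable: "pseudo_purifiable C"
begin

lemma pure_exists: "f \<in> hom C a b \<Longrightarrow> \<exists>x p. is_pure C a b f x p"
  using pseudo_purifiable unfolding pseudo_purifiable_def by blast

lemma is_pure_sequential:
  assumes "f1 \<in> hom C a1 (b1 \<odot> d)" "f2 \<in> hom C (d \<odot> a2) b2"
    and "is_pure C a1 (b1 \<odot> d) f1 x1 p1" "is_pure C (d \<odot> a2) b2 f2 x2 p2"
  shows "is_pure C (a1 \<odot> a2) (b1 \<odot> b2) ((idt b1 \<otimes> f2) \<bullet> (f1 \<otimes> idt a2)) (x1 \<odot> x2)
    ((idt (b1 \<odot> b2) \<otimes> sy x2 x1) \<bullet> ((idt b1 \<otimes> p2) \<otimes> idt x1) \<bullet>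
     (idt (b1 \<odot> d) \<otimes> sy x1 a2) \<bullet> (p1 \<otimes> idt a2))"
  using pseudo_purifiable assms unfolding pseudo_purifiable_def by blast

lemma is_pure_mtens_disc:
  assumes pure: "is_pure C a0 b0 f x p"
  shows "is_pure C (a0 \<odot> a1) b0 (f \<otimes> dsc a1) (x \<odot> a1) (p \<otimes> idt a1)"
proof -
  have f: "ar f" "dm f = a0" "cd f = b0" and p: "ar p" "dm p = a0" "cd p = b0 \<odot> x"
    using pure_homs[OF pure] by (auto simp: hom_iff)
  have "is_pure C (a0 \<odot> a1) (b0 \<odot> I) ((idt b0 \<otimes> dsc a1) \<bullet> (f \<otimes> idt a1)) (x \<odot> a1)
     ((idt (b0 \<odot> I) \<otimes> sy a1 x) \<bullet> ((idt b0 \<otimes> idt a1) \<otimes> idt x) \<bullet>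
      (idt (b0 \<odot> I) \<otimes> sy x a1) \<bullet> (p \<otimes> idt a1))"
    by (rule is_pure_sequential) (use pure f is_pure_disc[of a1] in \<open>auto simp: hom_iff\<close>)
  moreover have "(idt b0 \<otimes> dsc a1) \<bullet> (f \<otimes> idt a1) = f \<otimes> dsc a1"
    using interchange[of f "idt b0" "idt a1" "dsc a1"] f
    by (simp add: comp_ident_left comp_ident_right)
  moreover have "(idt b0 \<otimes> sy a1 x) \<bullet> idt (b0 \<odot> a1 \<odot> x) \<bullet> (idt b0 \<otimes> sy x a1) \<bullet> (p \<otimes> idt a1)
      = p \<otimes> idt a1"
    using p by (simp add: comp_ident_left ident_mtens_comp_assoc sym_inverse)
  ultimately show ?thesis by simp
qed

lemma marginal_factors_through_pure:
  assumes pure: "is_pure C a0 b0 f x p"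
    and prec: "prec C (a0 \<odot> a1) b0 g (f \<otimes> dsc a1)"
  obtains f2 where "f2 \<in> hom C (x \<odot> a1) I" "g = (idt b0 \<otimes> f2) \<bullet> (p \<otimes> idt a1)"
proof -
  obtain X g0 f0 where g0: "g0 \<in> hom C (a0 \<odot> a1) (b0 \<odot> X)" and f0: "f0 \<in> hom C X I"
    and g: "g = (idt b0 \<otimes> f0) \<bullet> g0" and marginal: "f \<otimes> dsc a1 = (idt b0 \<otimes> dsc X) \<bullet> g0"
    using prec unfolding prec_def by blast
  obtain c where c: "c \<in> hom C (x \<odot> a1) X" "g0 = (idt b0 \<otimes> c) \<bullet> (p \<otimes> idt a1)"
    using pure_factor[OF is_pure_mtens_disc[OF pure] g0 marginal[symmetric]] by blast
  show ?thesis
  proof (rule that[of "f0 \<bullet> c"])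
    show "f0 \<bullet> c \<in> hom C (x \<odot> a1) I"
      using c(1) f0 by (simp add: hom_iff)
    show "g = (idt b0 \<otimes> (f0 \<bullet> c)) \<bullet> (p \<otimes> idt a1)"
      using c f0 pure_homs(2)[OF pure] unfolding g by (simp add: hom_iff ident_mtens_comp_assoc)
  qed
qed

lemma is_pure_after_pure:
  assumes pure: "is_pure C a0 b0 f x p" and f2: "f2 \<in> hom C (x \<odot> a1) I"
  obtains X \<beta> where "\<beta> \<in> hom C (x \<odot> a1) X"
    "is_pure C (a0 \<odot> a1) b0 ((idt b0 \<otimes> f2) \<bullet> (p \<otimes> idt a1)) X ((idt b0 \<otimes> \<beta>) \<bullet> (p \<otimes> idt a1))"
proof -
  have p: "ar p" "dm p = a0" "cd p = b0 \<odot> x"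
    using pure_homs(2)[OF pure] by (auto simp: hom_iff)
  obtain X1 p1 where p1: "is_pure C a0 (b0 \<odot> x) p X1 p1"
    using pure_exists pure_homs(2)[OF pure] by blast
  obtain X2 p2 where p2: "is_pure C (x \<odot> a1) I f2 X2 p2"
    using pure_exists[OF f2] by blast
  have p1_typ: "ar p1" "dm p1 = a0" "cd p1 = b0 \<odot> x \<odot> X1"
    and p2_typ: "ar p2" "dm p2 = x \<odot> a1" "cd p2 = X2"
    using pure_homs(2)[OF p1] pure_homs(2)[OF p2] by (auto simp: hom_iff)
  \<comment> \<open>p1 dilates p, hence f, so it factors through the pseudo-purification p\<close>
  have "(idt b0 \<otimes> dsc (x \<odot> X1)) \<bullet> p1 = f"
    unfolding ident_mtens_disc_otens
    by (subst comp_assoc) (auto simp: p1_typ pure_marginal[OF p1] pure_marginal[OF pure])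
  then obtain \<gamma> where \<gamma>: "\<gamma> \<in> hom C x (x \<odot> X1)" "p1 = (idt b0 \<otimes> \<gamma>) \<bullet> p"
    using pure_factor[OF pure] p1_typ by (metis hom_iff)
  have \<gamma>_typ: "ar \<gamma>" "dm \<gamma> = x" "cd \<gamma> = x \<odot> X1"
    using \<gamma>(1) by (auto simp: hom_iff)
  have p1_mtens: "p1 \<otimes> idt a1 = (idt b0 \<otimes> \<gamma> \<otimes> idt a1) \<bullet> (p \<otimes> idt a1)"
    using interchange[of p "idt b0 \<otimes> \<gamma>" "idt a1" "idt a1"] \<gamma>_typ p \<gamma>(2)
    by (simp add: comp_ident_left)
  define \<beta> where "\<beta> = sy X2 X1 \<bullet> (p2 \<otimes> idt X1) \<bullet> (idt x \<otimes> sy X1 a1) \<bullet> (\<gamma> \<otimes> idt a1)"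
  have "is_pure C (a0 \<odot> a1) (b0 \<odot> I) ((idt b0 \<otimes> f2) \<bullet> (p \<otimes> idt a1)) (X1 \<odot> X2)
     ((idt (b0 \<odot> I) \<otimes> sy X2 X1) \<bullet> ((idt b0 \<otimes> p2) \<otimes> idt X1) \<bullet>
      (idt (b0 \<odot> x) \<otimes> sy X1 a1) \<bullet> (p1 \<otimes> idt a1))"
    by (rule is_pure_sequential) (use p f2 p1 p2 in \<open>auto simp: hom_iff\<close>)
  also have "(idt (b0 \<odot> I) \<otimes> sy X2 X1) \<bullet> ((idt b0 \<otimes> p2) \<otimes> idt X1) \<bullet>
      (idt (b0 \<odot> x) \<otimes> sy X1 a1) \<bullet> (p1 \<otimes> idt a1) = (idt b0 \<otimes> \<beta>) \<bullet> (p \<otimes> idt a1)"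
    unfolding p1_mtens \<beta>_def using \<gamma>_typ p p2_typ
    by (simp flip: ident_mtens add: ident_mtens_comp_assoc)
  finally show ?thesis
    using that[of \<beta> "X1 \<odot> X2"] \<gamma>_typ p2_typ by (simp add: \<beta>_def hom_iff)
qed

lemma dilation_factors_through_pure:
  assumes pure: "is_pure C a0 b0 f x p"
    and prec: "prec C (a0 \<odot> a1) b0 ((idt b0 \<otimes> dsc b1) \<bullet> h) (f \<otimes> dsc a1)"
    and D: "D \<in> hom C (a0 \<odot> a1) (b0 \<odot> b1 \<odot> z)" "(idt (b0 \<odot> b1) \<otimes> dsc z) \<bullet> D = h"
  obtains \<beta> where "\<beta> \<in> hom C (x \<odot> a1) (b1 \<odot> z)" "D = (idt b0 \<otimes> \<beta>) \<bullet> (p \<otimes> idt a1)"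
proof -
  obtain f2 where f2: "f2 \<in> hom C (x \<odot> a1) I"
    and marginal: "(idt b0 \<otimes> dsc b1) \<bullet> h = (idt b0 \<otimes> f2) \<bullet> (p \<otimes> idt a1)"
    using marginal_factors_through_pure[OF pure prec] by blast
  obtain X \<beta> where \<beta>: "\<beta> \<in> hom C (x \<odot> a1) X"
    and S: "is_pure C (a0 \<odot> a1) b0 ((idt b0 \<otimes> f2) \<bullet> (p \<otimes> idt a1)) X ((idt b0 \<otimes> \<beta>) \<bullet> (p \<otimes> idt a1))"
    using is_pure_after_pure[OF pure f2] by blast
  have "(idt b0 \<otimes> dsc (b1 \<odot> z)) \<bullet> D = (idt b0 \<otimes> f2) \<bullet> (p \<otimes> idt a1)"
    unfolding ident_mtens_disc_otens marginal[symmetric] D(2)[symmetric]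
    using D(1) by (subst comp_assoc) (auto simp: hom_iff)
  then obtain c where c: "c \<in> hom C X (b1 \<odot> z)" "D = (idt b0 \<otimes> c) \<bullet> (idt b0 \<otimes> \<beta>) \<bullet> (p \<otimes> idt a1)"
    using pure_factor[OF S] D(1) by blast
  show ?thesis
  proof (rule that[of "c \<bullet> \<beta>"])
    show "c \<bullet> \<beta> \<in> hom C (x \<odot> a1) (b1 \<odot> z)"
      using c(1) \<beta> by (simp add: hom_iff)
    show "D = (idt b0 \<otimes> (c \<bullet> \<beta>)) \<bullet> (p \<otimes> idt a1)"
      using c \<beta> pure_homs(2)[OF pure] by (simp add: hom_iff ident_mtens_comp_assoc)
  qed
qed

lemma monotone_step_factorization:
  assumes mono: "monotone_seq C A B f" and k: "1 \<le> k"
    and pure: "is_pure C (hat C A k) (hat C B k) (f k) x p"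
    and D: "D \<in> hom C (hat C A (Suc k)) (hat C B (Suc k) \<odot> z)"
      "(idt (hat C B (Suc k)) \<otimes> dsc z) \<bullet> D = f (Suc k)"
  obtains \<beta> where "\<beta> \<in> hom C (x \<odot> A (Suc k)) (B (Suc k) \<odot> z)"
    "D = (idt (hat C B k) \<otimes> \<beta>) \<bullet> (p \<otimes> idt (A (Suc k)))"
proof (rule dilation_factors_through_pure[OF pure])
  show "prec C (hat C A k \<odot> A (Suc k)) (hat C B k)
      ((idt (hat C B k) \<otimes> dsc (B (Suc k))) \<bullet> f (Suc k)) (f k \<otimes> dsc (A (Suc k)))"
    using mono k by (simp add: monotone_seq_def)
  show "D \<in> hom C (hat C A k \<odot> A (Suc k)) (hat C B k \<odot> B (Suc k) \<odot> z)"
    "(idt (hat C B k \<odot> B (Suc k)) \<otimes> dsc z) \<bullet> D = f (Suc k)"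
    using D by simp_all
qed (rule that)

lemma regular_seq_pure_dilations:
  assumes f: "\<forall>k\<ge>1. f k \<in> hom C (hat C A k) (hat C B k)" and reg: "regular_seq C A B f"
  obtains n X P greg where "1 \<le> n"
    "\<forall>k\<ge>1. P k \<in> hom C (hat C A k) (hat C B k \<odot> X k) \<and> (idt (hat C B k) \<otimes> dsc (X k)) \<bullet> P k = f k"
    "\<forall>k\<in>{1..<n}. is_pure C (hat C A k) (hat C B k) (f k) (X k) (P k)"
    "\<forall>k\<ge>n. A (Suc k) = A (Suc n) \<and> B (Suc k) = B (Suc n) \<and> X k = X n \<and>
       greg \<in> hom C (X k \<odot> A (Suc k)) (B (Suc k) \<odot> X (Suc k)) \<and>
       P (Suc k) = (idt (hat C B k) \<otimes> greg) \<bullet> (P k \<otimes> idt (A (Suc k)))"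
proof -
  obtain n A' B' M gir greg where n: "1 \<le> n" and AB: "\<forall>k>n. A k = A' \<and> B k = B'"
    and gir: "gir \<in> hom C (hat C A n) (hat C B n \<odot> M)"
    and greg: "greg \<in> hom C (M \<odot> A') (B' \<odot> M)"
    and f_psi: "\<forall>k\<ge>n. f k = (idt (hat C B k) \<otimes> dsc M) \<bullet> psi C A B n gir greg (k - n)"
    using reg unfolding regular_seq_def by blast
  have "\<forall>k. \<exists>x p. 1 \<le> k \<longrightarrow> is_pure C (hat C A k) (hat C B k) (f k) x p"
    using pure_exists f by blast
  then obtain Xp Pp where pure: "\<And>k. 1 \<le> k \<Longrightarrow> is_pure C (hat C A k) (hat C B k) (f k) (Xp k) (Pp k)"
    by metis
  define X where "X k = (if k < n then Xp k else M)" for k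
  define P where "P k = (if k < n then Pp k else psi C A B n gir greg (k - n))" for k
  show ?thesis
  proof (rule that[of n P X greg])
    show "\<forall>k\<ge>1. P k \<in> hom C (hat C A k) (hat C B k \<odot> X k) \<and> (idt (hat C B k) \<otimes> dsc (X k)) \<bullet> P k = f k"
    proof (intro allI impI conjI)
      fix k :: nat assume k: "1 \<le> k"
      show "P k \<in> hom C (hat C A k) (hat C B k \<odot> X k)"
        using pure_homs(2)[OF pure[OF k]] psi_hom[OF gir greg AB, of "k - n"]
        by (cases "k < n") (simp_all add: P_def X_def)
      show "(idt (hat C B k) \<otimes> dsc (X k)) \<bullet> P k = f k"
        using pure_marginal[OF pure[OF k]] f_psi by (simp add: P_def X_def)
    qed
    show "\<forall>k\<in>{1..<n}. is_pure C (hat C A k) (hat C B k) (f k) (X k) (P k)"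
      using pure by (simp add: X_def P_def)
    show "\<forall>k\<ge>n. A (Suc k) = A (Suc n) \<and> B (Suc k) = B (Suc n) \<and> X k = X n \<and>
       greg \<in> hom C (X k \<odot> A (Suc k)) (B (Suc k) \<odot> X (Suc k)) \<and>
       P (Suc k) = (idt (hat C B k) \<otimes> greg) \<bullet> (P k \<otimes> idt (A (Suc k)))"
    proof (intro allI impI)
      fix k assume k: "n \<le> k"
      have "A (Suc k) = A'" "B (Suc k) = B'" "A (Suc n) = A'" "B (Suc n) = B'"
        using AB k by simp_all
      moreover have "P (Suc k) = psi C A B n gir greg (Suc (k - n))" "P k = psi C A B n gir greg (k - n)"
        using k by (simp_all add: P_def Suc_diff_le)
      moreover have "X k = M" "X (Suc k) = M" "X n = M"
        using k by (simp_all add: X_def)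
      ultimately show "A (Suc k) = A (Suc n) \<and> B (Suc k) = B (Suc n) \<and> X k = X n \<and>
          greg \<in> hom C (X k \<odot> A (Suc k)) (B (Suc k) \<odot> X (Suc k)) \<and>
          P (Suc k) = (idt (hat C B k) \<otimes> greg) \<bullet> (P k \<otimes> idt (A (Suc k)))"
        using greg k by simp
    qed
  qed (rule n)
qed

lemma monotone_regular_layer_factorization:
  assumes f: "\<forall>k\<ge>1. f k \<in> hom C (hat C A k) (hat C B k)"
    and mono: "monotone_seq C A B f" and reg: "regular_seq C A B f"
  obtains X P \<beta> n where "layer_factorization A B X P \<beta>"
    "\<forall>k\<ge>1. (idt (hat C B k) \<otimes> dsc (X k)) \<bullet> P k = f k"
    "1 \<le> n" "\<forall>k\<ge>n. A (Suc k) = A (Suc n) \<and> B (Suc k) = B (Suc n) \<and> X k = X n \<and> \<beta> k = \<beta> n"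
proof -
  obtain n X P greg where n: "1 \<le> n"
    and P: "\<forall>k\<ge>1. P k \<in> hom C (hat C A k) (hat C B k \<odot> X k) \<and> (idt (hat C B k) \<otimes> dsc (X k)) \<bullet> P k = f k"
    and pure: "\<forall>k\<in>{1..<n}. is_pure C (hat C A k) (hat C B k) (f k) (X k) (P k)"
    and tail: "\<forall>k\<ge>n. A (Suc k) = A (Suc n) \<and> B (Suc k) = B (Suc n) \<and> X k = X n \<and>
       greg \<in> hom C (X k \<odot> A (Suc k)) (B (Suc k) \<odot> X (Suc k)) \<and>
       P (Suc k) = (idt (hat C B k) \<otimes> greg) \<bullet> (P k \<otimes> idt (A (Suc k)))"
    by (rule regular_seq_pure_dilations[OF f reg])
  have "\<forall>k\<in>{1..<n}. \<exists>\<beta>. \<beta> \<in> hom C (X k \<odot> A (Suc k)) (B (Suc k) \<odot> X (Suc k)) \<and>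
      P (Suc k) = (idt (hat C B k) \<otimes> \<beta>) \<bullet> (P k \<otimes> idt (A (Suc k)))"
  proof
    fix k assume k: "k \<in> {1..<n}"
    have "P (Suc k) \<in> hom C (hat C A (Suc k)) (hat C B (Suc k) \<odot> X (Suc k))"
      "(idt (hat C B (Suc k)) \<otimes> dsc (X (Suc k))) \<bullet> P (Suc k) = f (Suc k)"
      using P[rule_format, of "Suc k"] by simp_all
    then obtain \<beta> where "\<beta> \<in> hom C (X k \<odot> A (Suc k)) (B (Suc k) \<odot> X (Suc k))"
      "P (Suc k) = (idt (hat C B k) \<otimes> \<beta>) \<bullet> (P k \<otimes> idt (A (Suc k)))"
      using monotone_step_factorization[OF mono _ pure[rule_format, OF k]] k by auto
    then show "\<exists>\<beta>. \<beta> \<in> hom C (X k \<odot> A (Suc k)) (B (Suc k) \<odot> X (Suc k)) \<and>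
        P (Suc k) = (idt (hat C B k) \<otimes> \<beta>) \<bullet> (P k \<otimes> idt (A (Suc k)))"
      by blast
  qed
  then obtain \<beta>p where \<beta>p: "\<forall>k\<in>{1..<n}. \<beta>p k \<in> hom C (X k \<odot> A (Suc k)) (B (Suc k) \<odot> X (Suc k)) \<and>
      P (Suc k) = (idt (hat C B k) \<otimes> \<beta>p k) \<bullet> (P k \<otimes> idt (A (Suc k)))"
    by (rule bchoice [elim_format]) blast
  define \<beta> where "\<beta> k = (if k < n then \<beta>p k else greg)" for k
  have "layer_factorization A B X P \<beta>"
    unfolding layer_factorization_def
  proof (intro conjI allI impI)
    show "P 1 \<in> hom C (A 1) (B 1 \<odot> X 1)"
      using P[rule_format, of 1] by simp
    fix k :: nat assume k: "1 \<le> k"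
    show "\<beta> k \<in> hom C (X k \<odot> A (Suc k)) (B (Suc k) \<odot> X (Suc k))"
      "P (Suc k) = (idt (hat C B k) \<otimes> \<beta> k) \<bullet> (P k \<otimes> idt (A (Suc k)))"
      using \<beta>p tail[rule_format, of k] k by (cases "k < n"; simp add: \<beta>_def)+
  qed
  moreover have "\<forall>k\<ge>n. A (Suc k) = A (Suc n) \<and> B (Suc k) = B (Suc n) \<and> X k = X n \<and> \<beta> k = \<beta> n"
  proof (intro allI impI)
    fix k assume "n \<le> k"
    then show "A (Suc k) = A (Suc n) \<and> B (Suc k) = B (Suc n) \<and> X k = X n \<and> \<beta> k = \<beta> n"
      using tail[rule_format, of k] by (simp add: \<beta>_def)
  qed
  ultimately show ?thesis
    using that P n by blast
qed

end

theorem mainTheorem6: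
  fixes C :: "('o, 'm, 'x) dcat_scheme"
    and A B :: "nat \<Rightarrow> 'o"
    and f :: "nat \<Rightarrow> 'm"
  assumes "discard_category C"
    and "pseudo_purifiable C"
    and "\<forall>k\<ge>1. f k \<in> hom C (hat C A k) (hat C B k)"
    and "monotone_seq C A B f"
    and "regular_seq C A B f"
  shows "\<exists>M alpha. stateful_seq C A B M alpha \<and> regular_stateful A B M alpha \<and>
           (\<forall>k\<ge>1. FA C A B M alpha k = f k)"
proof -
  interpret pseudo_purifiable_cat C
    using assms(1,2) by unfold_locales
  obtain X P \<beta> n where fac: "layer_factorization A B X P \<beta>"
    and marginal: "\<forall>k\<ge>1. (idt (hat C B k) \<otimes> dsc (X k)) \<bullet> P k = f k"
    and regular: "1 \<le> n" "\<forall>k\<ge>n. A (Suc k) = A (Suc n) \<and> B (Suc k) = B (Suc n) \<and> X k = X n \<and> \<beta> k = \<beta> n"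
    by (rule monotone_regular_layer_factorization[OF assms(3-5)])
  show ?thesis
  proof (intro exI conjI)
    show "stateful_seq C A B (memories X) (layers A X P \<beta>)"
      using stateful_seq_layers[OF fac] .
    show "regular_stateful A B (memories X) (layers A X P \<beta>)"
      using regular_stateful_layers[OF regular] .
    show "\<forall>k\<ge>1. FA C A B (memories X) (layers A X P \<beta>) k = f k"
      by (simp add: FA_layers[OF fac] marginal)
  qed
qed

end
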